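(* Let $d\ge k\ge2$, $n\ge1$, $\Delta>0$, and let $\sigma:\mathbb{R}\to\mathbb{R}$ be a measurable function applied entrywise. Let the readout be dense with equal entries, $\mathbf v=k^{-1/2}(1,\dots,1)\in\mathbb{R}^k$. Let $\mathbf W^0\in\mathbb{R}^{k\times d}$ be drawn uniformly from the Stiefel manifold of $k\times d$ matrices with orthonormal rows, with rows $\mathbf w^0_1,\dots,\mathbf w^0_k$. Let $\mathbf x_\mu\sim\mathcal N(0,\mathbf I_d)$ and $z_\mu\sim\mathcal N(0,1)$, $\mu\in[n]$, be i.i.d. and independent of $\mathbf W^0$, and let the data be $\mathcal D=(\mathbf x_\mu,y^{\rm out}_\mu)_{\mu\in[n]}$ with $y^{\rm out}_\mu=\mathbf v^\top\sigma(\mathbf W^0\mathbf x_\mu)+\sqrt\Delta\,z_\mu$. Let $\mathbf W^1$ (with rows $\mathbf w^1_j$) be a sample from the posterior $P(\mathbf W\mid\mathcal D)\propto\nu(\mathbf W)\prod_{\mu\le n}\exp\!\big(-\tfrac{1}{2\Delta}(y^{\rm out}_\mu-\mathbf v^\top\sigma(\mathbf W\mathbf x_\mu))^2\big)$, where $\nu$ is the uniform measure on the Stiefel manifold, and let $\mathbb{E}\langle\cdot\rangle$ denote expectation over $\mathcal D,\mathbf W^0$ and the posterior sample. Then there is an absolute constant $C>0$ such that for all $i\neq j$ in $[k]$, $\mathbb{E}\langle(\mathbf w^0_i\cdot\mathbf w^1_j)^2\rangle\le C/k$; in particular this is $O(d^{-1})$ when $k=\Theta(d)$.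
   Context: $\langle\cdot\rangle$ denotes expectation with respect to the posterior distribution $P(\mathbf W\mid\mathcal D)$ given above; $\mathbb{E}$ denotes expectation over the data and the teacher weights $\mathbf W^0$. *)

theory Defs
  imports "HOL-Probability.Probability"
begin

text \<open>Matrices of size k x d are encoded as extensional functions on
  the index set {..<k} x {..<d} (rows are indexed by the first component).\<close>

definition mat_space :: "nat \<Rightarrow> nat \<Rightarrow> ((nat \<times> nat) \<Rightarrow> real) measure" where
  "mat_space k d = PiM ({..<k} \<times> {..<d}) (\<lambda>_. lborel)"

definition N01 :: "real measure" where
  "N01 = density lborel (\<lambda>x. ennreal (std_normal_density x))"

definition gauss_iid :: "'i set \<Rightarrow> ('i \<Rightarrow> real) measure" where
  "gauss_iid I = PiM I (\<lambda>_. N01)"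

definition stiefel :: "nat \<Rightarrow> nat \<Rightarrow> ((nat \<times> nat) \<Rightarrow> real) set" where
  "stiefel k d = {W \<in> extensional ({..<k} \<times> {..<d}).
     \<forall>i<k. \<forall>j<k. (\<Sum>l<d. W (i,l) * W (j,l)) = (if i = j then 1 else 0)}"

definition orthogonal_mat :: "nat \<Rightarrow> ((nat \<times> nat) \<Rightarrow> real) \<Rightarrow> bool" where
  "orthogonal_mat d Q \<longleftrightarrow> Q \<in> extensional ({..<d} \<times> {..<d}) \<and>
     (\<forall>i<d. \<forall>j<d. (\<Sum>l<d. Q (l,i) * Q (l,j)) = (if i = j then 1 else 0))"

definition rmul :: "nat \<Rightarrow> nat \<Rightarrow> ((nat \<times> nat) \<Rightarrow> real) \<Rightarrow> ((nat \<times> nat) \<Rightarrow> real)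
                    \<Rightarrow> ((nat \<times> nat) \<Rightarrow> real)" where
  "rmul k d W Q = (\<lambda>(i,j) \<in> {..<k} \<times> {..<d}. \<Sum>l<d. W (i,l) * Q (l,j))"

text \<open>The uniform (Haar) probability measure on the Stiefel manifold:
  a probability measure on k x d matrices concentrated on the Stiefel manifold
  and invariant under right multiplication by orthogonal matrices
  (this characterises it uniquely, since O(d) acts transitively).\<close>
definition uniform_stiefel :: "nat \<Rightarrow> nat \<Rightarrow> ((nat \<times> nat) \<Rightarrow> real) measure \<Rightarrow> bool" where
  "uniform_stiefel k d \<nu> \<longleftrightarrow> prob_space \<nu> \<and> sets \<nu> = sets (mat_space k d) \<and>
     emeasure \<nu> (stiefel k d) = 1 \<and>
     (\<forall>Q. orthogonal_mat d Q \<longrightarrow> distr \<nu> (mat_space k d) (\<lambda>W. rmul k d W Q) = \<nu>)"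

definition net_out :: "nat \<Rightarrow> nat \<Rightarrow> (real \<Rightarrow> real) \<Rightarrow> ((nat \<times> nat) \<Rightarrow> real)
                       \<Rightarrow> (nat \<Rightarrow> real) \<Rightarrow> real" where
  "net_out k d \<sigma> W x = (\<Sum>j<k. (1 / sqrt (real k)) * \<sigma> (\<Sum>l<d. W (j,l) * x l))"

definition likelihood :: "nat \<Rightarrow> nat \<Rightarrow> nat \<Rightarrow> real \<Rightarrow> (real \<Rightarrow> real)
     \<Rightarrow> ((nat \<times> nat) \<Rightarrow> real) \<Rightarrow> (nat \<Rightarrow> real) \<Rightarrow> ((nat \<times> nat) \<Rightarrow> real) \<Rightarrow> real" where
  "likelihood k d n \<Delta> \<sigma> X Y W =
     (\<Prod>\<mu><n. exp (- (Y \<mu> - net_out k d \<sigma> W (\<lambda>l. X (\<mu>,l)))\<^sup>2 / (2 * \<Delta>)))"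

definition posterior :: "nat \<Rightarrow> nat \<Rightarrow> nat \<Rightarrow> real \<Rightarrow> (real \<Rightarrow> real)
     \<Rightarrow> ((nat \<times> nat) \<Rightarrow> real) measure \<Rightarrow> ((nat \<times> nat) \<Rightarrow> real) \<Rightarrow> (nat \<Rightarrow> real)
     \<Rightarrow> ((nat \<times> nat) \<Rightarrow> real) measure" where
  "posterior k d n \<Delta> \<sigma> \<nu> X Y =
     density \<nu> (\<lambda>W. ennreal (likelihood k d n \<Delta> \<sigma> X Y W /
                              (\<integral>W'. likelihood k d n \<Delta> \<sigma> X Y W' \<partial>\<nu>)))"

definition labels :: "nat \<Rightarrow> nat \<Rightarrow> real \<Rightarrow> (real \<Rightarrow> real) \<Rightarrow> ((nat \<times> nat) \<Rightarrow> real)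
     \<Rightarrow> ((nat \<times> nat) \<Rightarrow> real) \<Rightarrow> (nat \<Rightarrow> real) \<Rightarrow> (nat \<Rightarrow> real)" where
  "labels k d \<Delta> \<sigma> W0 X Z = (\<lambda>\<mu>. net_out k d \<sigma> W0 (\<lambda>l. X (\<mu>,l)) + sqrt \<Delta> * Z \<mu>)"

end

theory Submission
  imports Defs "HOL-Computational_Algebra.Polynomial"
begin

(*
  For fixed data the posterior is the prior reweighted by a likelihood that is invariant under
  permuting the hidden units, i.e. the rows of W. If the prior is invariant under such permutations
  too, then the posterior mean of (x . w_j)^2 does not depend on j, and by Bessel's inequality for
  the orthonormal rows of W the k means sum to at most |x|^2 = 1; so each is at most 1/k.

  The uniform measure nu on the Stiefel manifold is only assumed to be invariant under right
  multiplication by orthogonal matrices, so invariance under swapping two rows a, b has to be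
  derived. For W with orthonormal rows the swap is right multiplication by the Householder
  reflection H_W in w_a - w_b. Let R(V) be the orthogonal matrix obtained by Gram-Schmidt from the
  first rows of d independent samples V of nu. Then swap (W R(V)) = W H_W R(V) = W R(V H_W), and
  V H_W has the same law as V; averaging the right invariance of nu over R(V) gives the claim.
  Gram-Schmidt is almost surely nondegenerate because the first row of a sample of nu lies in a
  fixed hyperplane with probability 0.
*)

section \<open>Vectors and orthonormal sequences\<close>

definition dot :: "nat \<Rightarrow> (nat \<Rightarrow> real) \<Rightarrow> (nat \<Rightarrow> real) \<Rightarrow> real" where
  "dot d x y = (\<Sum>l<d. x l * y l)"

abbreviation sqnorm :: "nat \<Rightarrow> (nat \<Rightarrow> real) \<Rightarrow> real" where
  "sqnorm d x \<equiv> dot d x x"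

abbreviation mrow :: "(nat \<times> nat \<Rightarrow> real) \<Rightarrow> nat \<Rightarrow> nat \<Rightarrow> real" where
  "mrow M r \<equiv> (\<lambda>l. M (r,l))"

lemma dot_commute: "dot d x y = dot d y x"
  unfolding dot_def by (simp add: mult.commute)

lemma dot_diff_left: "dot d (\<lambda>l. a l - b l) x = dot d a x - dot d b x"
  unfolding dot_def by (simp add: left_diff_distrib sum_subtractf)

lemma dot_diff_right: "dot d x (\<lambda>l. a l - b l) = dot d x a - dot d x b"
  unfolding dot_def by (simp add: right_diff_distrib sum_subtractf)

lemma dot_sum_left: "dot d (\<lambda>l. \<Sum>j\<in>J. c j * y j l) x = (\<Sum>j\<in>J. c j * dot d (y j) x)"
  unfolding dot_def by (simp add: sum_distrib_left sum_distrib_right mult_ac sum.swap[of _ J])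

lemma dot_sum_right: "dot d x (\<lambda>l. \<Sum>j\<in>J. c j * y j l) = (\<Sum>j\<in>J. c j * dot d x (y j))"
  unfolding dot_def by (simp add: sum_distrib_left sum_distrib_right mult_ac sum.swap[of _ J])

lemma dot_divide_left: "dot d (\<lambda>l. y l / c) x = dot d y x / c"
  unfolding dot_def by (simp add: sum_divide_distrib)

lemma dot_divide_right: "dot d x (\<lambda>l. y l / c) = dot d x y / c"
  unfolding dot_def by (simp add: sum_divide_distrib)

lemma dot_scale_left: "dot d (\<lambda>l. a * x l) y = a * dot d x y"
  unfolding dot_def by (simp add: sum_distrib_left mult_ac)

lemma dot_scale_right: "dot d x (\<lambda>l. a * y l) = a * dot d x y"
  unfolding dot_def by (simp add: sum_distrib_left mult_ac)

lemma dot_cong: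
  "(\<And>l. l < d \<Longrightarrow> x l = x' l) \<Longrightarrow> (\<And>l. l < d \<Longrightarrow> y l = y' l) \<Longrightarrow> dot d x y = dot d x' y'"
  unfolding dot_def by (rule sum.cong) auto

lemma dot_indicator_right: "c < d \<Longrightarrow> dot d x (\<lambda>l. if l = c then 1 else 0) = x c"
  unfolding dot_def by (simp add: of_bool_def[symmetric])

lemma sqnorm_nonneg: "0 \<le> sqnorm d x"
  unfolding dot_def by (simp add: sum_nonneg)

lemma sqnorm_eq_0D: "sqnorm d x = 0 \<Longrightarrow> l < d \<Longrightarrow> x l = 0"
  unfolding dot_def by (subst (asm) sum_nonneg_eq_0_iff) auto

lemma sqnorm_pos: "\<exists>l<d. x l \<noteq> 0 \<Longrightarrow> 0 < sqnorm d x"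
  using sqnorm_eq_0D sqnorm_nonneg by (metis order_le_less)

definition orthonormal_seq :: "nat \<Rightarrow> nat \<Rightarrow> (nat \<Rightarrow> nat \<Rightarrow> real) \<Rightarrow> bool" where
  "orthonormal_seq d m s \<longleftrightarrow> (\<forall>i<m. \<forall>j<m. dot d (s i) (s j) = (if i = j then 1 else 0))"

lemma orthonormal_seq_stiefel: "W \<in> stiefel k d \<Longrightarrow> orthonormal_seq d k (mrow W)"
  unfolding stiefel_def orthonormal_seq_def dot_def by auto

lemma sum_dot_orthonormal_seq:
  assumes "orthonormal_seq d m s" "i < m"
  shows "(\<Sum>j<m. c j * dot d (s j) (s i)) = c i" "(\<Sum>j<m. c j * dot d (s i) (s j)) = c i"
  using assms unfolding orthonormal_seq_def by (simp_all add: of_bool_def[symmetric])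

lemma bessel_inequality:
  assumes s: "orthonormal_seq d m s"
  shows "(\<Sum>j<m. (dot d x (s j))\<^sup>2) \<le> sqnorm d x"
proof -
  define c where "c j = dot d x (s j)" for j
  define p where "p = (\<lambda>l. \<Sum>j<m. c j * s j l)"
  have xp: "dot d x p = (\<Sum>j<m. (c j)\<^sup>2)"
    unfolding p_def by (simp add: dot_sum_right c_def power2_eq_square)
  have pp: "sqnorm d p = (\<Sum>j<m. (c j)\<^sup>2)"
    unfolding p_def
    by (simp add: dot_sum_left dot_sum_right sum_dot_orthonormal_seq[OF s] power2_eq_square)
  have "0 \<le> sqnorm d (\<lambda>l. x l - p l)" by (rule sqnorm_nonneg)
  also have "\<dots> = sqnorm d x - (\<Sum>j<m. (c j)\<^sup>2)"
    using xp pp by (simp add: dot_diff_left dot_diff_right dot_commute[of d p x])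
  finally show ?thesis by (simp add: c_def)
qed

lemma orthonormal_seq_orthogonal_exists:
  assumes s: "orthonormal_seq d m s" and "m < d"
  obtains a where "\<exists>l<d. a l \<noteq> 0" and "\<forall>j<m. dot d a (s j) = 0"
proof -
  \<comment> \<open>\<open>a c\<close> is the projection of the \<open>c\<close>-th unit vector onto the orthogonal complement
    of the \<open>s j\<close>. If all of them vanished, the projection onto the span of the \<open>s j\<close> would be
    the identity and its trace \<open>m\<close> would equal \<open>d\<close>.\<close>
  define a where "a c = (\<lambda>l. (if l = c then 1 else 0) - (\<Sum>j<m. s j c * s j l))" for c
  have perp: "dot d (a c) (s i) = 0" if "c < d" "i < m" for c i
    using that unfolding a_def
    by (simp add: dot_diff_left dot_sum_left sum_dot_orthonormal_seq[OF s]
        dot_commute[of d "\<lambda>l. if l = c then 1 else 0"] dot_indicator_right)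
  have "\<exists>c<d. a c c \<noteq> 0"
  proof (rule ccontr)
    assume "\<not> (\<exists>c<d. a c c \<noteq> 0)"
    then have "(\<Sum>c<d. 1::real) = (\<Sum>c<d. \<Sum>j<m. s j c * s j c)"
      unfolding a_def by (intro sum.cong) auto
    also have "\<dots> = (\<Sum>j<m. sqnorm d (s j))"
      unfolding dot_def by (rule sum.swap)
    also have "\<dots> = real m" using s unfolding orthonormal_seq_def by simp
    finally show False using \<open>m < d\<close> by simp
  qed
  then obtain c where "c < d" "a c c \<noteq> 0" by blast
  then show thesis using perp that[of "a c"] by blast
qed

definition vmult :: "nat \<Rightarrow> (nat \<Rightarrow> real) \<Rightarrow> (nat \<times> nat \<Rightarrow> real) \<Rightarrow> nat \<Rightarrow> real" where
  "vmult d x H = (\<lambda>l. if l < d then (\<Sum>b<d. x b * H (b,l)) else 0)"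

lemma vmult_diff: "l < d \<Longrightarrow> vmult d (\<lambda>l. a l - b l) H l = vmult d a H l - vmult d b H l"
  unfolding vmult_def by (simp add: left_diff_distrib sum_subtractf)

lemma vmult_sum:
  "l < d \<Longrightarrow> vmult d (\<lambda>l. \<Sum>j\<in>J. c j * y j l) H l = (\<Sum>j\<in>J. c j * vmult d (y j) H l)"
  unfolding vmult_def by (simp add: sum_distrib_left sum_distrib_right mult_ac sum.swap[of _ J])

lemma vmult_divide: "vmult d (\<lambda>l. y l / c) H l = vmult d y H l / c"
  unfolding vmult_def by (simp add: sum_divide_distrib)

lemma dot_vmult_vmult:
  assumes "orthonormal_seq d d (mrow H)"
  shows "dot d (vmult d x H) (vmult d y H) = dot d x y"
proof -
  have "dot d (vmult d x H) (vmult d y H) = (\<Sum>l<d. (\<Sum>b<d. x b * H (b,l)) * (\<Sum>c<d. y c * H (c,l)))"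
    unfolding dot_def vmult_def by simp
  also have "\<dots> = (\<Sum>l<d. \<Sum>b<d. \<Sum>c<d. x b * y c * (H (b,l) * H (c,l)))"
    unfolding sum_product by (intro sum.cong refl) (simp add: ac_simps)
  also have "\<dots> = (\<Sum>b<d. \<Sum>l<d. \<Sum>c<d. x b * y c * (H (b,l) * H (c,l)))"
    by (rule sum.swap)
  also have "\<dots> = (\<Sum>b<d. \<Sum>c<d. \<Sum>l<d. x b * y c * (H (b,l) * H (c,l)))"
    by (intro sum.cong refl sum.swap)
  also have "\<dots> = (\<Sum>b<d. \<Sum>c<d. x b * y c * dot d (mrow H b) (mrow H c))"
    unfolding dot_def by (simp add: sum_distrib_left)
  also have "\<dots> = dot d x y"
    using assms unfolding orthonormal_seq_def dot_def[of d x y]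
    by (simp add: of_bool_def[symmetric])
  finally show ?thesis .
qed

lemma dot_vmult_symmetric:
  assumes "\<And>a b. H (a,b) = H (b,a)"
  shows "dot d x (vmult d y H) = dot d (vmult d x H) y"
proof -
  have "dot d x (vmult d y H) = (\<Sum>l<d. \<Sum>b<d. x l * y b * H (b,l))"
    unfolding dot_def vmult_def by (simp add: sum_distrib_left mult_ac)
  also have "\<dots> = (\<Sum>b<d. \<Sum>l<d. x l * y b * H (l,b))"
    by (subst sum.swap) (simp add: assms)
  also have "\<dots> = (\<Sum>b<d. (\<Sum>l<d. x l * H (l,b)) * y b)"
    by (simp add: sum_distrib_left sum_distrib_right mult_ac)
  also have "\<dots> = dot d (vmult d x H) y"
    unfolding dot_def vmult_def by simp
  finally show ?thesis .
qed

section \<open>Gram-Schmidt orthonormalisation\<close>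

function gram_schmidt :: "nat \<Rightarrow> (nat \<Rightarrow> nat \<Rightarrow> real) \<Rightarrow> nat \<Rightarrow> nat \<Rightarrow> real" where
  "gram_schmidt d U m =
     (let r = (\<lambda>l. U m l - (\<Sum>j<m. dot d (U m) (gram_schmidt d U j) * gram_schmidt d U j l))
      in (\<lambda>l. r l / sqrt (sqnorm d r)))"
  by auto
termination by (relation "Wellfounded.measure (\<lambda>(d,U,m). m)") auto

declare gram_schmidt.simps [simp del]

definition gs_residual :: "nat \<Rightarrow> (nat \<Rightarrow> nat \<Rightarrow> real) \<Rightarrow> nat \<Rightarrow> nat \<Rightarrow> real" where
  "gs_residual d U m =
     (\<lambda>l. U m l - (\<Sum>j<m. dot d (U m) (gram_schmidt d U j) * gram_schmidt d U j l))"

lemma gram_schmidt_eq: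
  "gram_schmidt d U m = (\<lambda>l. gs_residual d U m l / sqrt (sqnorm d (gs_residual d U m)))"
  by (subst gram_schmidt.simps) (simp add: gs_residual_def Let_def)

lemma orthonormal_seq_gram_schmidt:
  assumes "\<forall>j<m. sqnorm d (gs_residual d U j) \<noteq> 0"
  shows "orthonormal_seq d m (gram_schmidt d U)"
  using assms
proof (induction m)
  case 0
  then show ?case by (simp add: orthonormal_seq_def)
next
  case (Suc m)
  then have IH: "orthonormal_seq d m (gram_schmidt d U)" by simp
  define r where "r = gs_residual d U m"
  have r_pos: "0 < sqnorm d r"
    using Suc.prems sqnorm_nonneg[of d r] unfolding r_def by (metis lessI order_less_le)
  have gm: "gram_schmidt d U m = (\<lambda>l. r l / sqrt (sqnorm d r))"
    unfolding r_def by (rule gram_schmidt_eq)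
  have "dot d (gram_schmidt d U i) r = 0" if "i < m" for i
    unfolding r_def gs_residual_def
    by (simp add: dot_diff_right dot_sum_right sum_dot_orthonormal_seq[OF IH that] dot_commute)
  then have perp: "dot d (gram_schmidt d U i) (gram_schmidt d U m) = 0" if "i < m" for i
    using that by (simp add: gm dot_divide_right)
  then have perp': "dot d (gram_schmidt d U m) (gram_schmidt d U i) = 0" if "i < m" for i
    using that by (metis dot_commute)
  have "sqnorm d (gram_schmidt d U m) = sqnorm d r / (sqrt (sqnorm d r) * sqrt (sqnorm d r))"
    by (simp add: gm dot_divide_left dot_divide_right)
  also have "\<dots> = 1" using r_pos by simp
  finally show ?case
    using IH perp perp' unfolding orthonormal_seq_def by (auto simp: less_Suc_eq)
qed

lemma gs_residual_eq_0_imp_orthogonal: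
  assumes "sqnorm d (gs_residual d U m) = 0"
    and "\<forall>j<m. dot d a (gram_schmidt d U j) = 0"
  shows "dot d a (U m) = 0"
proof -
  have "dot d a (U m) = dot d a (\<lambda>l. gs_residual d U m l +
      (\<Sum>j<m. dot d (U m) (gram_schmidt d U j) * gram_schmidt d U j l))"
    unfolding gs_residual_def by simp
  also have "\<dots> = dot d a (\<lambda>l. \<Sum>j<m. dot d (U m) (gram_schmidt d U j) * gram_schmidt d U j l)"
    using sqnorm_eq_0D[OF assms(1)] by (intro dot_cong) auto
  also have "\<dots> = 0" using assms(2) by (simp add: dot_sum_right)
  finally show ?thesis .
qed

lemma gs_residual_cong: "(\<And>i. i \<le> m \<Longrightarrow> U i = U' i) \<Longrightarrow> gs_residual d U m = gs_residual d U' m"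
  and gram_schmidt_cong: "(\<And>i. i \<le> m \<Longrightarrow> U i = U' i) \<Longrightarrow> gram_schmidt d U m = gram_schmidt d U' m"
proof -
  have "gs_residual d U m = gs_residual d U' m \<and> gram_schmidt d U m = gram_schmidt d U' m"
    if "\<And>i. i \<le> m \<Longrightarrow> U i = U' i" for m
    using that
  proof (induction m rule: less_induct)
    case (less m)
    then have "gs_residual d U m = gs_residual d U' m"
      unfolding gs_residual_def by (intro ext arg_cong2[where f="(-)"] sum.cong) auto
    then show ?case by (simp add: gram_schmidt_eq)
  qed
  then show "(\<And>i. i \<le> m \<Longrightarrow> U i = U' i) \<Longrightarrow> gs_residual d U m = gs_residual d U' m"
    and "(\<And>i. i \<le> m \<Longrightarrow> U i = U' i) \<Longrightarrow> gram_schmidt d U m = gram_schmidt d U' m"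
    by blast+
qed

lemma gram_schmidt_vmult:
  assumes H: "orthonormal_seq d d (mrow H)"
  shows "l < d \<Longrightarrow> gs_residual d (\<lambda>m. vmult d (U m) H) m l = vmult d (gs_residual d U m) H l"
    and "l < d \<Longrightarrow> gram_schmidt d (\<lambda>m. vmult d (U m) H) m l = vmult d (gram_schmidt d U m) H l"
proof -
  define U' where "U' = (\<lambda>m. vmult d (U m) H)"
  have "\<forall>l<d. gs_residual d U' m l = vmult d (gs_residual d U m) H l \<and>
      gram_schmidt d U' m l = vmult d (gram_schmidt d U m) H l"
  proof (induction m rule: less_induct)
    case (less m)
    then have IH: "\<And>j l. j < m \<Longrightarrow> l < d \<Longrightarrow> gram_schmidt d U' j l = vmult d (gram_schmidt d U j) H l"
      by blast
    have coeff: "dot d (U' m) (gram_schmidt d U' j) = dot d (U m) (gram_schmidt d U j)"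
      if "j < m" for j
    proof -
      have "dot d (U' m) (gram_schmidt d U' j) =
          dot d (vmult d (U m) H) (vmult d (gram_schmidt d U j) H)"
        using IH[OF that] unfolding U'_def by (intro dot_cong) auto
      then show ?thesis using dot_vmult_vmult[OF H] by simp
    qed
    have res: "gs_residual d U' m l = vmult d (gs_residual d U m) H l" if "l < d" for l
    proof -
      have "gs_residual d U' m l =
          U' m l - (\<Sum>j<m. dot d (U m) (gram_schmidt d U j) * vmult d (gram_schmidt d U j) H l)"
        unfolding gs_residual_def using IH coeff that
        by (intro arg_cong2[where f="(-)"] sum.cong) auto
      also have "\<dots> = vmult d (gs_residual d U m) H l"
        unfolding gs_residual_def using that by (simp add: vmult_diff vmult_sum U'_def)
      finally show ?thesis .
    qed
    have "sqnorm d (gs_residual d U' m) = sqnorm d (vmult d (gs_residual d U m) H)"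
      using res by (intro dot_cong) auto
    then have "sqnorm d (gs_residual d U' m) = sqnorm d (gs_residual d U m)"
      using dot_vmult_vmult[OF H] by simp
    then show ?case using res by (simp add: gram_schmidt_eq vmult_divide)
  qed
  then show "l < d \<Longrightarrow> gs_residual d (\<lambda>m. vmult d (U m) H) m l = vmult d (gs_residual d U m) H l"
    and "l < d \<Longrightarrow> gram_schmidt d (\<lambda>m. vmult d (U m) H) m l = vmult d (gram_schmidt d U m) H l"
    unfolding U'_def by blast+
qed

section \<open>Householder reflections\<close>

text \<open>For \<open>D = 0\<close> this is the identity matrix, since \<open>2 / 0 = 0\<close>.\<close>

definition householder :: "nat \<Rightarrow> (nat \<Rightarrow> real) \<Rightarrow> (nat \<times> nat \<Rightarrow> real)" where
  "householder d D =
     (\<lambda>(l,m)\<in>{..<d}\<times>{..<d}. (if l = m then 1 else 0) - 2 / sqnorm d D * D l * D m)"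

lemma householder_symmetric: "householder d D (a,b) = householder d D (b,a)"
  unfolding householder_def by (auto simp: mult_ac)

lemma vmult_householder:
  "l < d \<Longrightarrow> vmult d x (householder d D) l = x l - 2 / sqnorm d D * dot d x D * D l"
  unfolding vmult_def householder_def dot_def
  by (simp add: right_diff_distrib sum_subtractf sum_distrib_left sum_distrib_right
      sum_divide_distrib of_bool_def[symmetric] mult_ac)

lemma dot_vmult_householder:
  "dot d (vmult d x (householder d D)) (vmult d y (householder d D)) = dot d x y"
proof -
  define c where "c = 2 / sqnorm d D"
  have "dot d (vmult d x (householder d D)) (vmult d y (householder d D)) =
      dot d (\<lambda>l. x l - c * dot d x D * D l) (\<lambda>l. y l - c * dot d y D * D l)"
    by (intro dot_cong) (simp_all add: vmult_householder c_def)
  also have "\<dots> =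
      dot d x y - 2 * c * dot d x D * dot d y D + c * c * dot d x D * dot d y D * sqnorm d D"
    unfolding dot_diff_left dot_diff_right dot_scale_left dot_scale_right
    by (simp add: dot_commute[of d D x] dot_commute[of d D y] algebra_simps)
  also have "\<dots> = dot d x y"
    unfolding c_def by (cases "sqnorm d D = 0") (simp_all add: power2_eq_square)
  finally show ?thesis .
qed

lemma orthonormal_seq_householder: "orthonormal_seq d d (mrow (householder d D))"
proof -
  have row: "householder d D (i,l) = vmult d (\<lambda>l. if l = i then 1 else 0) (householder d D) l"
    if "i < d" "l < d" for i l
    using that unfolding vmult_def by (simp add: of_bool_def[symmetric])
  have "dot d (mrow (householder d D) i) (mrow (householder d D) j) = (if i = j then 1 else 0)"
    if "i < d" "j < d" for i j
    using that
    by (simp add: dot_cong[OF row row] dot_vmult_householder dot_indicator_right)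
  then show ?thesis unfolding orthonormal_seq_def by blast
qed

lemma orthogonal_mat_householder: "orthogonal_mat d (householder d D)"
proof -
  have "(\<Sum>l<d. householder d D (l,i) * householder d D (l,j)) = (if i = j then 1 else 0)"
    if "i < d" "j < d" for i j
    using orthonormal_seq_householder[of d D] that
    unfolding orthonormal_seq_def dot_def
    by (simp add: householder_symmetric[of d D _ i] householder_symmetric[of d D _ j])
  then show ?thesis
    unfolding orthogonal_mat_def by (simp add: householder_def)
qed

lemma householder_swaps_rows:
  assumes W: "W \<in> stiefel k d" and ab: "a < k" "b < k" "a \<noteq> b" and "r < k" "l < d"
  shows "vmult d (mrow W r) (householder d (\<lambda>l. W (a,l) - W (b,l))) l =
    W (Transposition.transpose a b r, l)"
proof -
  define D where "D = (\<lambda>l. W (a,l) - W (b,l))"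
  have W_orth: "orthonormal_seq d k (mrow W)" by (rule orthonormal_seq_stiefel[OF W])
  have rD: "dot d (mrow W r') D = (if r' = a then 1 else 0) - (if r' = b then 1 else 0)"
    if "r' < k" for r'
    using W_orth ab that unfolding D_def orthonormal_seq_def by (simp add: dot_diff_right)
  have "sqnorm d D = dot d (mrow W a) D - dot d (mrow W b) D"
    unfolding D_def by (rule dot_diff_left)
  also have "\<dots> = 2" using rD[of a] rD[of b] ab by simp
  finally have "sqnorm d D = 2" .
  then show ?thesis
    using \<open>l < d\<close> rD[OF \<open>r < k\<close>] ab unfolding D_def[symmetric]
    by (auto simp: vmult_householder D_def Transposition.transpose_def)
qed

lemma householder_reflects_to_column:
  assumes u: "sqnorm d u = 1" and "c < d" "l < d"
  shows "householder d (\<lambda>m. u m - (if m = c then 1 else 0)) (l,c) = u l"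
proof -
  define e where "e = (\<lambda>m::nat. if m = c then 1 else (0::real))"
  define D where "D = (\<lambda>m. u m - e m)"
  have ue: "dot d u e = u c" "sqnorm d e = 1"
    using \<open>c < d\<close> unfolding e_def by (simp_all add: dot_indicator_right)
  have DD: "sqnorm d D = 2 - 2 * u c"
    using u ue unfolding D_def by (simp add: dot_diff_left dot_diff_right dot_commute[of d e u])
  have "householder d D (l,c) = u l"
  proof (cases "u c = 1")
    case True
    then have "D l = 0" using DD sqnorm_eq_0D \<open>l < d\<close> by simp
    then show ?thesis using \<open>c < d\<close> \<open>l < d\<close> True DD unfolding householder_def D_def e_def by auto
  next
    case False
    then have scale: "2 / sqnorm d D * D c = -1"
      using DD unfolding D_def e_def by (simp add: field_simps)
    have "householder d D (l,c) = e l - (2 / sqnorm d D * D c) * D l"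
      using \<open>c < d\<close> \<open>l < d\<close> unfolding householder_def e_def by (simp add: mult_ac)
    then have "householder d D (l,c) = e l + D l" using scale by (simp only: mult_minus1)
    then show ?thesis by (simp add: D_def)
  qed
  then show ?thesis unfolding D_def e_def .
qed

section \<open>The uniform measure on the Stiefel manifold\<close>

lemma measurable_mat_entry [measurable]:
  "a < k \<Longrightarrow> b < d \<Longrightarrow> (\<lambda>W. W (a,b)) \<in> borel_measurable (mat_space k d)"
  unfolding mat_space_def
  using measurable_component_singleton[of "(a,b)" "{..<k} \<times> {..<d}" "\<lambda>_. lborel"] by simp

lemma measurable_dot_row [measurable]:
  "r < k \<Longrightarrow> (\<lambda>W. dot d x (mrow W r)) \<in> borel_measurable (mat_space k d)"
  unfolding dot_def by measurable

lemma space_mat_space: "space (mat_space k d) = PiE ({..<k} \<times> {..<d}) (\<lambda>_. UNIV)"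
  unfolding mat_space_def by (simp add: space_PiM)

lemma stiefel_subset_space: "stiefel k d \<subseteq> space (mat_space k d)"
  unfolding stiefel_def space_mat_space by (auto simp: PiE_def)

lemma rmul_in_space: "rmul k d W Q \<in> space (mat_space k d)"
  unfolding space_mat_space rmul_def by auto

lemma measurable_rmul_right: "(\<lambda>W. rmul k d W Q) \<in> measurable (mat_space k d) (mat_space k d)"
  unfolding rmul_def by (subst (2) mat_space_def) (rule measurable_restrict, auto)

lemma measurable_rmul:
  assumes f: "f \<in> measurable M (mat_space k d)" and g: "g \<in> measurable M (mat_space d d)"
  shows "(\<lambda>x. rmul k d (f x) (g x)) \<in> measurable M (mat_space k d)"
proof -
  have "(\<lambda>x. f x (i,l)) \<in> borel_measurable M" "(\<lambda>x. g x (l,j)) \<in> borel_measurable M"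
    if "i < k" "l < d" "j < d" for i l j
    using that measurable_compose[OF f measurable_mat_entry] measurable_compose[OF g measurable_mat_entry]
    by auto
  then show ?thesis
    unfolding rmul_def by (subst mat_space_def) (rule measurable_restrict, auto)
qed

lemma uniform_stiefel_prob_space: "uniform_stiefel k d \<nu> \<Longrightarrow> prob_space \<nu>"
  unfolding uniform_stiefel_def by simp

lemma sets_uniform_stiefel: "uniform_stiefel k d \<nu> \<Longrightarrow> sets \<nu> = sets (mat_space k d)"
  unfolding uniform_stiefel_def by simp

lemma space_uniform_stiefel: "uniform_stiefel k d \<nu> \<Longrightarrow> space \<nu> = space (mat_space k d)"
  by (rule sets_eq_imp_space_eq[OF sets_uniform_stiefel])

lemma measurable_uniform_stiefel_iff:
  assumes "uniform_stiefel k d \<nu>"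
  shows "measurable \<nu> N = measurable (mat_space k d) N"
    and "measurable N \<nu> = measurable N (mat_space k d)"
  by (rule measurable_cong_sets[OF sets_uniform_stiefel[OF assms] refl],
      rule measurable_cong_sets[OF refl sets_uniform_stiefel[OF assms]])

lemma AE_uniform_stiefel: "uniform_stiefel k d \<nu> \<Longrightarrow> AE W in \<nu>. W \<in> stiefel k d"
proof -
  assume u: "uniform_stiefel k d \<nu>"
  interpret prob_space \<nu> by (rule uniform_stiefel_prob_space[OF u])
  have "emeasure \<nu> (stiefel k d) = 1" using u unfolding uniform_stiefel_def by simp
  then show ?thesis
    by (intro AE_prob_1) (auto simp: emeasure_eq_measure dest: emeasure_notin_sets)
qed

lemma nn_integral_uniform_stiefel_rmul:
  assumes u: "uniform_stiefel k d \<nu>" and Q: "orthogonal_mat d Q"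
    and g: "g \<in> borel_measurable (mat_space k d)"
  shows "(\<integral>\<^sup>+W. g (rmul k d W Q) \<partial>\<nu>) = (\<integral>\<^sup>+W. g W \<partial>\<nu>)"
proof -
  have "(\<integral>\<^sup>+W. g (rmul k d W Q) \<partial>\<nu>) = (\<integral>\<^sup>+W. g W \<partial>distr \<nu> (mat_space k d) (\<lambda>W. rmul k d W Q))"
    using g by (intro nn_integral_distr[symmetric])
      (simp_all add: measurable_uniform_stiefel_iff[OF u] measurable_rmul_right)
  also have "distr \<nu> (mat_space k d) (\<lambda>W. rmul k d W Q) = \<nu>"
    using u Q unfolding uniform_stiefel_def by simp
  finally show ?thesis .
qed

lemma uniform_stiefel_hyperplane_eq:
  assumes u: "uniform_stiefel k d \<nu>" and "r < k" and a: "\<exists>l<d. a l \<noteq> 0"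
  shows "emeasure \<nu> {W \<in> space \<nu>. dot d a (mrow W r) = 0} = emeasure \<nu> {W \<in> space \<nu>. W (r,0) = 0}"
proof -
  note sets_uniform_stiefel[OF u, measurable_cong]
  have "0 < d" using a by auto
  define n where "n = sqrt (sqnorm d a)"
  have "0 < n" using sqnorm_pos[OF a] unfolding n_def by simp
  define H where "H = householder d (\<lambda>m. a m / n - (if m = 0 then 1 else 0))"
  have "sqnorm d (\<lambda>l. a l / n) = 1"
    using \<open>0 < n\<close> unfolding n_def by (simp add: dot_divide_left dot_divide_right)
  then have "H (l,0) = a l / n" if "l < d" for l
    unfolding H_def using \<open>0 < d\<close> that by (rule householder_reflects_to_column)
  then have "rmul k d W H (r,0) = dot d a (mrow W r) / n" for W
    using \<open>r < k\<close> \<open>0 < d\<close> unfolding rmul_def dot_def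
    by (simp add: sum_divide_distrib mult.commute)
  then have indicator_eq: "indicator {W \<in> space \<nu>. dot d a (mrow W r) = 0} W =
      (indicator {W \<in> space \<nu>. W (r,0) = 0} (rmul k d W H) :: ennreal)" if "W \<in> space \<nu>" for W
    using that \<open>0 < n\<close> rmul_in_space space_uniform_stiefel[OF u] by (simp add: indicator_def)
  have "{W \<in> space \<nu>. dot d a (mrow W r) = 0} \<in> sets \<nu>"
    using \<open>r < k\<close> by measurable
  then have "emeasure \<nu> {W \<in> space \<nu>. dot d a (mrow W r) = 0} =
      (\<integral>\<^sup>+W. indicator {W \<in> space \<nu>. dot d a (mrow W r) = 0} W \<partial>\<nu>)"
    by simp
  also have "\<dots> = (\<integral>\<^sup>+W. indicator {W \<in> space \<nu>. W (r,0) = 0} (rmul k d W H) \<partial>\<nu>)"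
    using indicator_eq by (rule nn_integral_cong)
  also have "\<dots> = (\<integral>\<^sup>+W. indicator {W \<in> space \<nu>. W (r,0) = 0} W \<partial>\<nu>)"
    using \<open>r < k\<close> \<open>0 < d\<close> unfolding H_def
    by (intro nn_integral_uniform_stiefel_rmul[OF u orthogonal_mat_householder]) measurable
  also have "\<dots> = emeasure \<nu> {W \<in> space \<nu>. W (r,0) = 0}"
    using \<open>r < k\<close> \<open>0 < d\<close> by (intro nn_integral_indicator) measurable
  finally show ?thesis .
qed

lemma stiefel_row_nonzero:
  assumes "W \<in> stiefel k d" "r < k"
  shows "\<exists>l<d. W (r,l) \<noteq> 0"
proof (rule ccontr)
  assume "\<not> ?thesis"
  then have "(\<Sum>l<d. W (r,l) * W (r,l)) = 0" by simp
  then show False using assms unfolding stiefel_def by auto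
qed

lemma card_zeros_moment_curve_le:
  assumes "\<exists>l<d. w l \<noteq> 0"
  shows "card {t \<in> {..<N}. dot d (\<lambda>l. real t ^ l) w = 0} \<le> d"
proof -
  define p where "p = (\<Sum>l<d. monom (w l) l)"
  have poly_p: "poly p x = dot d (\<lambda>l. x ^ l) w" for x
    unfolding p_def dot_def by (simp add: poly_sum poly_monom mult.commute)
  have coeff_p: "coeff p i = (if i < d then w i else 0)" for i
    unfolding p_def by (simp add: coeff_sum)
  have "p \<noteq> 0" using assms coeff_p by (metis coeff_0)
  have "card {t \<in> {..<N}. dot d (\<lambda>l. real t ^ l) w = 0} =
      card (real ` {t \<in> {..<N}. dot d (\<lambda>l. real t ^ l) w = 0})"
    by (rule card_image[symmetric]) (auto simp: inj_on_def)
  also have "\<dots> \<le> card {x. poly p x = 0}"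
    using poly_p by (intro card_mono poly_roots_finite[OF \<open>p \<noteq> 0\<close>]) auto
  also have "\<dots> \<le> degree p" by (rule card_poly_roots_bound[OF \<open>p \<noteq> 0\<close>])
  also have "\<dots> \<le> d" using coeff_p by (intro degree_le) auto
  finally show ?thesis .
qed

lemma uniform_stiefel_moment_hyperplanes:
  assumes u: "uniform_stiefel k d \<nu>" and "r < k" and "0 < d"
  shows "real N * measure \<nu> {W \<in> space \<nu>. W (r,0) = 0} \<le> real d"
proof -
  \<comment> \<open>All hyperplanes have the same measure, and a nonzero vector is orthogonal
    to at most \<open>d\<close> of the points \<open>(1, t, \<dots>, t^(d-1))\<close> of the moment curve.\<close>
  interpret prob_space \<nu> by (rule uniform_stiefel_prob_space[OF u])
  note sets_uniform_stiefel[OF u, measurable_cong]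
  define A where "A t = {W \<in> space \<nu>. dot d (\<lambda>l. real t ^ l) (mrow W r) = 0}" for t :: nat
  have A_sets: "A t \<in> sets \<nu>" for t
    unfolding A_def using \<open>r < k\<close> by measurable
  have "emeasure \<nu> (A t) = measure \<nu> {W \<in> space \<nu>. W (r,0) = 0}" for t
    unfolding A_def using \<open>0 < d\<close>
    by (subst uniform_stiefel_hyperplane_eq[OF u \<open>r < k\<close>]) (auto simp: emeasure_eq_measure)
  then have "ennreal (real N * measure \<nu> {W \<in> space \<nu>. W (r,0) = 0}) = (\<Sum>t<N. emeasure \<nu> (A t))"
    by (simp add: ennreal_mult ennreal_of_nat_eq_real_of_nat)
  also have "\<dots> = (\<integral>\<^sup>+W. (\<Sum>t<N. indicator (A t) W) \<partial>\<nu>)"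
    using A_sets by (simp add: nn_integral_sum)
  also have "\<dots> \<le> (\<integral>\<^sup>+W. of_nat d \<partial>\<nu>)"
  proof (rule nn_integral_mono_AE)
    show "AE W in \<nu>. (\<Sum>t<N. indicator (A t) W) \<le> (of_nat d :: ennreal)"
      using AE_uniform_stiefel[OF u]
    proof eventually_elim
      case (elim W)
      have "card {t \<in> {..<N}. dot d (\<lambda>l. real t ^ l) (mrow W r) = 0} \<le> d"
        by (rule card_zeros_moment_curve_le[OF stiefel_row_nonzero[OF elim \<open>r < k\<close>]])
      then have "card {t \<in> {..<N}. W \<in> A t} \<le> d"
        by (rule order_trans[rotated], intro card_mono) (auto simp: A_def)
      then show ?case
        by (simp add: indicator_def sum.If_cases Collect_conj_eq lessThan_def)
    qed
  qed
  finally show ?thesis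
    by (simp add: emeasure_space_1 ennreal_of_nat_eq_real_of_nat)
qed

lemma uniform_stiefel_hyperplane_null:
  assumes u: "uniform_stiefel k d \<nu>" and "r < k" and a: "\<exists>l<d. a l \<noteq> 0"
  shows "emeasure \<nu> {W \<in> space \<nu>. dot d a (mrow W r) = 0} = 0"
proof -
  interpret prob_space \<nu> by (rule uniform_stiefel_prob_space[OF u])
  have "0 < d" using a by auto
  define p where "p = measure \<nu> {W \<in> space \<nu>. W (r,0) = 0}"
  have "p = 0"
  proof (rule ccontr)
    assume "p \<noteq> 0"
    then have "0 < p" unfolding p_def by (simp add: zero_less_measure_iff)
    then obtain N :: nat where "real d < real N * p" using reals_Archimedean3 by blast
    then show False
      using uniform_stiefel_moment_hyperplanes[OF u \<open>r < k\<close> \<open>0 < d\<close>, of N] unfolding p_def by simp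
  qed
  then show ?thesis
    using uniform_stiefel_hyperplane_eq[OF u \<open>r < k\<close> a] unfolding p_def
    by (simp add: emeasure_eq_measure)
qed

section \<open>A random orthogonal frame\<close>

definition first_rows :: "nat \<Rightarrow> (nat \<Rightarrow> (nat \<times> nat \<Rightarrow> real)) \<Rightarrow> nat \<Rightarrow> nat \<Rightarrow> real" where
  "first_rows d V = (\<lambda>m l. if m < d \<and> l < d then V m (0,l) else 0)"

definition gs_nondegenerate :: "nat \<Rightarrow> (nat \<Rightarrow> nat \<Rightarrow> real) \<Rightarrow> bool" where
  "gs_nondegenerate d U \<longleftrightarrow> (\<forall>m<d. sqnorm d (gs_residual d U m) \<noteq> 0)"

definition gs_matrix :: "nat \<Rightarrow> (nat \<Rightarrow> nat \<Rightarrow> real) \<Rightarrow> (nat \<times> nat \<Rightarrow> real)" where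
  "gs_matrix d U = (\<lambda>(l,c)\<in>{..<d}\<times>{..<d}.
     if gs_nondegenerate d U then gram_schmidt d U c l else if l = c then 1 else 0)"

definition rmul_samples ::
    "nat \<Rightarrow> nat \<Rightarrow> (nat \<times> nat \<Rightarrow> real) \<Rightarrow> (nat \<Rightarrow> (nat \<times> nat \<Rightarrow> real)) \<Rightarrow> (nat \<Rightarrow> (nat \<times> nat \<Rightarrow> real))"
  where "rmul_samples k d H V = (\<lambda>m\<in>{..<d}. rmul k d (V m) H)"

lemma measurable_gram_schmidt:
  assumes U: "\<And>m l. (\<lambda>x. U x m l) \<in> borel_measurable M"
  shows "(\<lambda>x. gs_residual d (U x) m l) \<in> borel_measurable M"
    and "(\<lambda>x. gram_schmidt d (U x) m l) \<in> borel_measurable M"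
proof -
  have "(\<forall>l. (\<lambda>x. gs_residual d (U x) m l) \<in> borel_measurable M) \<and>
      (\<forall>l. (\<lambda>x. gram_schmidt d (U x) m l) \<in> borel_measurable M)"
  proof (induction m rule: less_induct)
    case (less m)
    have res: "(\<lambda>x. gs_residual d (U x) m l) \<in> borel_measurable M" for l
      unfolding gs_residual_def dot_def
      by (intro borel_measurable_diff borel_measurable_sum borel_measurable_times U)
        (use less in auto)
    have "(\<lambda>x. sqnorm d (gs_residual d (U x) m)) \<in> borel_measurable M"
      unfolding dot_def by (intro borel_measurable_sum borel_measurable_times res)
    then have "(\<lambda>x. sqrt (sqnorm d (gs_residual d (U x) m))) \<in> borel_measurable M"
      by measurable
    then show ?case using res unfolding gram_schmidt_eq by (auto intro: borel_measurable_divide)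
  qed
  then show "(\<lambda>x. gs_residual d (U x) m l) \<in> borel_measurable M"
    and "(\<lambda>x. gram_schmidt d (U x) m l) \<in> borel_measurable M"
    by blast+
qed

lemma measurable_first_rows:
  assumes u: "uniform_stiefel k d \<nu>" and "0 < k"
  shows "(\<lambda>V. first_rows d V m l) \<in> borel_measurable (PiM {..<d} (\<lambda>_. \<nu>))"
proof (cases "m < d \<and> l < d")
  case True
  have "(\<lambda>V. V m) \<in> measurable (PiM {..<d} (\<lambda>_. \<nu>)) \<nu>"
    using True by (intro measurable_component_singleton) auto
  moreover have "(\<lambda>W. W (0,l)) \<in> borel_measurable \<nu>"
    unfolding measurable_uniform_stiefel_iff(1)[OF u] using True \<open>0 < k\<close>
    by (intro measurable_mat_entry) auto
  ultimately show ?thesis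
    using True unfolding first_rows_def by (simp add: measurable_compose)
qed (auto simp: first_rows_def)

lemma measurable_gs_residual_first_rows:
  assumes "uniform_stiefel k d \<nu>" and "0 < k"
  shows "(\<lambda>V. sqnorm d (gs_residual d (first_rows d V) m))
    \<in> borel_measurable (PiM {..<d} (\<lambda>_. \<nu>))"
  unfolding dot_def
  by (intro borel_measurable_sum borel_measurable_times measurable_gram_schmidt
      measurable_first_rows[OF assms])

lemma gs_residual_first_rows_upd:
    "j < m \<Longrightarrow> gs_residual d (first_rows d (V(m := W))) j = gs_residual d (first_rows d V) j"
  and gram_schmidt_first_rows_upd:
    "j < m \<Longrightarrow> gram_schmidt d (first_rows d (V(m := W))) j = gram_schmidt d (first_rows d V) j"
  by (auto intro!: gs_residual_cong gram_schmidt_cong simp: first_rows_def)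

lemma AE_gs_residual_upd_nonzero:
  assumes u: "uniform_stiefel k d \<nu>" and "0 < k" and "m < d"
    and nondeg: "\<forall>j<m. sqnorm d (gs_residual d (first_rows d V) j) \<noteq> 0"
  shows "AE W in \<nu>. sqnorm d (gs_residual d (first_rows d (V(m := W))) m) \<noteq> 0"
proof -
  \<comment> \<open>The residual can only vanish if the first row of the new sample lies in a fixed hyperplane.\<close>
  have "orthonormal_seq d m (gram_schmidt d (first_rows d V))"
    using nondeg by (rule orthonormal_seq_gram_schmidt)
  then obtain a where a: "\<exists>l<d. a l \<noteq> 0" "\<forall>j<m. dot d a (gram_schmidt d (first_rows d V) j) = 0"
    using \<open>m < d\<close> by (rule orthonormal_seq_orthogonal_exists)
  have "{W \<in> space \<nu>. dot d a (mrow W 0) = 0} \<in> null_sets \<nu>"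
    using uniform_stiefel_hyperplane_null[OF u \<open>0 < k\<close> a(1)] \<open>0 < k\<close>
      sets_uniform_stiefel[OF u, measurable_cong]
    by (intro null_setsI) measurable
  moreover have "dot d a (mrow W 0) = 0"
    if "sqnorm d (gs_residual d (first_rows d (V(m := W))) m) = 0"
    for W
  proof -
    have "dot d a (first_rows d (V(m := W)) m) = 0"
      using that
      by (rule gs_residual_eq_0_imp_orthogonal) (simp add: a(2) gram_schmidt_first_rows_upd)
    moreover have "dot d a (first_rows d (V(m := W)) m) = dot d a (mrow W 0)"
      using \<open>m < d\<close> by (intro dot_cong) (auto simp: first_rows_def)
    ultimately show ?thesis by simp
  qed
  ultimately show ?thesis
    by (intro AE_I') auto
qed

lemma AE_gs_residual_nonzero_step:
  assumes u: "uniform_stiefel k d \<nu>" and "0 < k" and "m < d"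
  defines "nz V j \<equiv> sqnorm d (gs_residual d (first_rows d V) j) \<noteq> 0"
  shows "AE V in PiM {..<d} (\<lambda>_. \<nu>). (\<forall>j<m. nz V j) \<longrightarrow> nz V m"
proof -
  interpret prob_space \<nu> by (rule uniform_stiefel_prob_space[OF u])
  interpret P: product_prob_space "\<lambda>_::nat. \<nu>"
    by (rule product_prob_spaceI) (rule uniform_stiefel_prob_space[OF u])
  let ?P = "PiM {..<d} (\<lambda>_. \<nu>)"
  define E where "E = {V \<in> space ?P. (\<forall>j<m. nz V j) \<and> \<not> nz V m}"
  have E_sets: "E \<in> sets ?P"
    unfolding E_def nz_def using measurable_gs_residual_first_rows[OF u \<open>0 < k\<close>] by measurable
  define I where "I = {..<d} - {m}"
  have insert_I: "{..<d} = insert m I" and "m \<notin> I" "finite I" using \<open>m < d\<close> I_def by auto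
  have "emeasure ?P E = (\<integral>\<^sup>+V. indicator E V \<partial>?P)" using E_sets by simp
  also have "\<dots> = (\<integral>\<^sup>+V. (\<integral>\<^sup>+W. indicator E (V(m := W)) \<partial>\<nu>) \<partial>PiM I (\<lambda>_. \<nu>))"
    unfolding insert_I
    by (rule P.product_nn_integral_insert[OF \<open>finite I\<close> \<open>m \<notin> I\<close>]) (use E_sets insert_I in simp)
  also have "\<dots> = (\<integral>\<^sup>+V. 0 \<partial>PiM I (\<lambda>_. \<nu>))"
  proof (rule nn_integral_cong)
    fix V
    show "(\<integral>\<^sup>+W. indicator E (V(m := W)) \<partial>\<nu>) = 0"
    proof (cases "\<forall>j<m. nz V j")
      case True
      then have "AE W in \<nu>. nz (V(m := W)) m"
        unfolding nz_def by (rule AE_gs_residual_upd_nonzero[OF u \<open>0 < k\<close> \<open>m < d\<close>])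
      then have "AE W in \<nu>. indicator E (V(m := W)) = (0::ennreal)"
        by eventually_elim (simp add: E_def)
      then have "(\<integral>\<^sup>+W. indicator E (V(m := W)) \<partial>\<nu>) = (\<integral>\<^sup>+W. 0 \<partial>\<nu>)"
        by (rule nn_integral_cong_AE)
      then show ?thesis by simp
    next
      case False
      then have "indicator E (V(m := W)) = (0::ennreal)" for W
        unfolding E_def nz_def by (auto simp: indicator_def gs_residual_first_rows_upd)
      then show ?thesis by simp
    qed
  qed
  finally have "emeasure ?P E = 0" by simp
  moreover have "{V \<in> space ?P. \<not> ((\<forall>j<m. nz V j) \<longrightarrow> nz V m)} \<subseteq> E"
    unfolding E_def by blast
  ultimately show ?thesis
    by (rule AE_I'[OF null_setsI[OF _ E_sets]])
qed

lemma AE_gs_nondegenerate: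
  assumes u: "uniform_stiefel k d \<nu>" and "0 < k"
  shows "AE V in PiM {..<d} (\<lambda>_. \<nu>). gs_nondegenerate d (first_rows d V)"
proof -
  have "AE V in PiM {..<d} (\<lambda>_. \<nu>). \<forall>m\<in>{..<d}.
      (\<forall>j<m. sqnorm d (gs_residual d (first_rows d V) j) \<noteq> 0) \<longrightarrow>
      sqnorm d (gs_residual d (first_rows d V) m) \<noteq> 0"
    using AE_gs_residual_nonzero_step[OF u \<open>0 < k\<close>] by (intro AE_finite_allI) auto
  then show ?thesis
  proof (rule AE_mp[OF _ AE_I2], intro impI)
    fix V
    assume step: "\<forall>m\<in>{..<d}.
      (\<forall>j<m. sqnorm d (gs_residual d (first_rows d V) j) \<noteq> 0) \<longrightarrow>
      sqnorm d (gs_residual d (first_rows d V) m) \<noteq> 0"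
    have "m < d \<longrightarrow> sqnorm d (gs_residual d (first_rows d V) m) \<noteq> 0" for m
      by (induction m rule: less_induct) (use step in auto)
    then show "gs_nondegenerate d (first_rows d V)"
      unfolding gs_nondegenerate_def by blast
  qed
qed

lemma orthogonal_mat_gs_matrix: "orthogonal_mat d (gs_matrix d U)"
proof -
  have "(\<Sum>l<d. gs_matrix d U (l,i) * gs_matrix d U (l,j)) = (if i = j then 1 else 0)"
    if "i < d" "j < d" for i j
  proof (cases "gs_nondegenerate d U")
    case True
    then have "orthonormal_seq d d (gram_schmidt d U)"
      unfolding gs_nondegenerate_def by (rule orthonormal_seq_gram_schmidt)
    then show ?thesis
      using that True unfolding gs_matrix_def orthonormal_seq_def dot_def by simp
  next
    case False
    then show ?thesis using that unfolding gs_matrix_def by (simp add: of_bool_def[symmetric])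
  qed
  then show ?thesis unfolding orthogonal_mat_def gs_matrix_def by auto
qed

lemma measurable_gs_matrix:
  assumes "uniform_stiefel k d \<nu>" and "0 < k"
  shows "(\<lambda>V. gs_matrix d (first_rows d V)) \<in> measurable (PiM {..<d} (\<lambda>_. \<nu>)) (mat_space d d)"
proof -
  let ?P = "PiM {..<d} (\<lambda>_. \<nu>)"
  have "{V \<in> space ?P. gs_nondegenerate d (first_rows d V)} \<in> sets ?P"
    unfolding gs_nondegenerate_def using measurable_gs_residual_first_rows[OF assms] by measurable
  moreover have "(\<lambda>V. gram_schmidt d (first_rows d V) c l) \<in> borel_measurable ?P" for c l
    by (intro measurable_gram_schmidt measurable_first_rows[OF assms])
  ultimately have "(\<lambda>V. if gs_nondegenerate d (first_rows d V)
      then gram_schmidt d (first_rows d V) c l else if l = c then 1 else 0) \<in> borel_measurable ?P"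
    for l c
    by (intro measurable_If) auto
  then show ?thesis
    unfolding gs_matrix_def by (subst mat_space_def) (rule measurable_restrict, auto)
qed

lemma first_rows_rmul_samples:
  "0 < k \<Longrightarrow> first_rows d (rmul_samples k d H V) = (\<lambda>m. vmult d (first_rows d V m) H)"
  unfolding first_rows_def rmul_samples_def vmult_def by (auto simp: rmul_def fun_eq_iff)

lemma measurable_rmul_samples:
  assumes u: "uniform_stiefel k d \<nu>"
  shows "rmul_samples k d H \<in> measurable (PiM {..<d} (\<lambda>_. \<nu>)) (PiM {..<d} (\<lambda>_. \<nu>))"
proof -
  have "(\<lambda>W. rmul k d W H) \<in> measurable \<nu> \<nu>"
    unfolding measurable_uniform_stiefel_iff[OF u] by (rule measurable_rmul_right)
  then show ?thesis
    unfolding rmul_samples_def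
    by (intro measurable_restrict measurable_compose[OF measurable_component_singleton]) auto
qed

lemma distr_rmul_samples:
  assumes u: "uniform_stiefel k d \<nu>" and H: "orthogonal_mat d H"
  shows "distr (PiM {..<d} (\<lambda>_. \<nu>)) (PiM {..<d} (\<lambda>_. \<nu>)) (rmul_samples k d H) =
    PiM {..<d} (\<lambda>_. \<nu>)"
proof -
  have P: "product_prob_space (\<lambda>_::nat. \<nu>)"
    by (rule product_prob_spaceI) (rule uniform_stiefel_prob_space[OF u])
  have rmul_H: "(\<lambda>W. rmul k d W H) \<in> measurable \<nu> \<nu>"
    unfolding measurable_uniform_stiefel_iff[OF u] by (rule measurable_rmul_right)
  have "distr \<nu> \<nu> (\<lambda>W. rmul k d W H) = distr \<nu> (mat_space k d) (\<lambda>W. rmul k d W H)"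
    by (rule distr_cong) (auto simp: sets_uniform_stiefel[OF u])
  also have "\<dots> = \<nu>" using u H unfolding uniform_stiefel_def by simp
  finally have "distr \<nu> \<nu> (\<lambda>W. rmul k d W H) = \<nu>" .
  then show ?thesis
    using distr_PiM_finite_prob_space[OF _ P P rmul_H]
    unfolding rmul_samples_def compose_def by simp
qed

lemma gs_nondegenerate_rmul_samples:
  assumes "0 < k" and H: "orthonormal_seq d d (mrow H)"
  shows "gs_nondegenerate d (first_rows d (rmul_samples k d H V)) =
    gs_nondegenerate d (first_rows d V)"
proof -
  have "sqnorm d (gs_residual d (first_rows d (rmul_samples k d H V)) m) =
        sqnorm d (vmult d (gs_residual d (first_rows d V) m) H)" for m
    unfolding first_rows_rmul_samples[OF \<open>0 < k\<close>]
    by (intro dot_cong) (simp_all add: gram_schmidt_vmult[OF H])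
  then show ?thesis
    unfolding gs_nondegenerate_def by (simp add: dot_vmult_vmult[OF H])
qed

section \<open>Invariance under swapping rows\<close>

definition swap_rows :: "nat \<Rightarrow> nat \<Rightarrow> nat \<Rightarrow> nat \<Rightarrow> (nat \<times> nat \<Rightarrow> real) \<Rightarrow> (nat \<times> nat \<Rightarrow> real)" where
  "swap_rows k d a b W = (\<lambda>(r,c)\<in>{..<k}\<times>{..<d}. W (Transposition.transpose a b r, c))"

lemma measurable_swap_rows:
  assumes "a < k" "b < k"
  shows "swap_rows k d a b \<in> measurable (mat_space k d) (mat_space k d)"
  unfolding swap_rows_def
  apply (subst (2) mat_space_def)
  apply (rule measurable_restrict)
  subgoal for i
    by (cases i) (simp only: case_prod_conv measurable_lborel1, rule measurable_mat_entry,
        auto simp: assms Transposition.transpose_def)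
  done

lemma swap_rows_rmul_gs_matrix:
  assumes "0 < k" and W: "W \<in> stiefel k d" and ab: "a < k" "b < k" "a \<noteq> b"
    and nondeg: "gs_nondegenerate d (first_rows d V)"
  defines "H \<equiv> householder d (\<lambda>l. W (a,l) - W (b,l))"
  shows "swap_rows k d a b (rmul k d W (gs_matrix d (first_rows d V))) =
    rmul k d W (gs_matrix d (first_rows d (rmul_samples k d H V)))"
proof -
  \<comment> \<open>Swapping rows \<open>a\<close> and \<open>b\<close> of \<open>W\<close> is right multiplication by the symmetric matrix \<open>H\<close>,
    which can be moved onto the Gram-Schmidt vectors, i.e. onto the samples.\<close>
  let ?U = "first_rows d V" and ?U' = "first_rows d (rmul_samples k d H V)"
  have H_rows: "orthonormal_seq d d (mrow H)"
    unfolding H_def by (rule orthonormal_seq_householder)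
  have nondeg': "gs_nondegenerate d ?U'"
    using nondeg gs_nondegenerate_rmul_samples[OF \<open>0 < k\<close> H_rows] by simp
  have "dot d (mrow W (Transposition.transpose a b r)) (gram_schmidt d ?U c) =
      dot d (mrow W r) (gram_schmidt d ?U' c)" if "r < k" for r c
  proof -
    have "dot d (mrow W (Transposition.transpose a b r)) (gram_schmidt d ?U c) =
        dot d (vmult d (mrow W r) H) (gram_schmidt d ?U c)"
      unfolding H_def using householder_swaps_rows[OF W ab that] by (intro dot_cong) auto
    also have "\<dots> = dot d (mrow W r) (vmult d (gram_schmidt d ?U c) H)"
      unfolding H_def by (rule dot_vmult_symmetric[symmetric]) (rule householder_symmetric)
    also have "\<dots> = dot d (mrow W r) (gram_schmidt d ?U' c)"
      unfolding first_rows_rmul_samples[OF \<open>0 < k\<close>]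
      by (intro dot_cong) (simp_all add: gram_schmidt_vmult[OF H_rows])
    finally show ?thesis .
  qed
  then have "swap_rows k d a b (rmul k d W (gs_matrix d ?U)) (r,c) =
      rmul k d W (gs_matrix d ?U') (r,c)"
    if "r < k" "c < d" for r c
    using that ab nondeg nondeg'
    by (simp add: swap_rows_def rmul_def gs_matrix_def dot_def Transposition.transpose_def)
  then show ?thesis
    unfolding swap_rows_def rmul_def by (intro ext) auto
qed

lemma nn_integral_rmul_random_frame:
  assumes u: "uniform_stiefel k d \<nu>" and "0 < k" and g: "g \<in> borel_measurable (mat_space k d)"
  shows "(\<integral>\<^sup>+W. g W \<partial>\<nu>) =
    (\<integral>\<^sup>+W. \<integral>\<^sup>+V. g (rmul k d W (gs_matrix d (first_rows d V))) \<partial>PiM {..<d} (\<lambda>_. \<nu>) \<partial>\<nu>)"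
proof -
  let ?P = "PiM {..<d} (\<lambda>_. \<nu>)" and ?R = "\<lambda>V. gs_matrix d (first_rows d V)"
  interpret \<nu>: prob_space \<nu> by (rule uniform_stiefel_prob_space[OF u])
  interpret P: prob_space ?P by (intro prob_space_PiM uniform_stiefel_prob_space[OF u])
  interpret pair_sigma_finite \<nu> ?P
    by (intro pair_sigma_finite.intro \<nu>.sigma_finite_measure_axioms P.sigma_finite_measure_axioms)
  have "(\<lambda>p. rmul k d (fst p) (?R (snd p))) \<in> measurable (\<nu> \<Otimes>\<^sub>M ?P) (mat_space k d)"
    using measurable_fst[of \<nu> ?P] measurable_gs_matrix[OF u \<open>0 < k\<close>]
    by (intro measurable_rmul) (auto simp: measurable_uniform_stiefel_iff[OF u])
  then have g_R: "(\<lambda>(W,V). g (rmul k d W (?R V))) \<in> borel_measurable (\<nu> \<Otimes>\<^sub>M ?P)"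
    using g by (simp add: case_prod_unfold)
  have "(\<integral>\<^sup>+W. g W \<partial>\<nu>) = (\<integral>\<^sup>+V. (\<integral>\<^sup>+W. g W \<partial>\<nu>) \<partial>?P)"
    by (simp add: P.emeasure_space_1)
  also have "\<dots> = (\<integral>\<^sup>+V. (\<integral>\<^sup>+W. g (rmul k d W (?R V)) \<partial>\<nu>) \<partial>?P)"
    by (simp add: nn_integral_uniform_stiefel_rmul[OF u orthogonal_mat_gs_matrix g])
  also have "\<dots> = (\<integral>\<^sup>+W. (\<integral>\<^sup>+V. g (rmul k d W (?R V)) \<partial>?P) \<partial>\<nu>)"
    by (rule Fubini'[OF g_R])
  finally show ?thesis .
qed

lemma nn_integral_random_frame_swap_rows:
  assumes u: "uniform_stiefel k d \<nu>" and "0 < k" and W: "W \<in> stiefel k d"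
    and ab: "a < k" "b < k" "a \<noteq> b" and g: "g \<in> borel_measurable (mat_space k d)"
  shows "(\<integral>\<^sup>+V. g (swap_rows k d a b (rmul k d W (gs_matrix d (first_rows d V))))
      \<partial>PiM {..<d} (\<lambda>_. \<nu>)) =
    (\<integral>\<^sup>+V. g (rmul k d W (gs_matrix d (first_rows d V))) \<partial>PiM {..<d} (\<lambda>_. \<nu>))"
proof -
  let ?P = "PiM {..<d} (\<lambda>_. \<nu>)" and ?R = "\<lambda>V. gs_matrix d (first_rows d V)"
  define H where "H = householder d (\<lambda>l. W (a,l) - W (b,l))"
  have "(\<lambda>V. rmul k d W (?R V)) \<in> measurable ?P (mat_space k d)"
    using W stiefel_subset_space measurable_gs_matrix[OF u \<open>0 < k\<close>]
    by (intro measurable_rmul measurable_const) auto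
  then have g_R: "(\<lambda>V. g (rmul k d W (?R V))) \<in> borel_measurable ?P"
    using g by simp
  have "(\<integral>\<^sup>+V. g (swap_rows k d a b (rmul k d W (?R V))) \<partial>?P) =
      (\<integral>\<^sup>+V. g (rmul k d W (?R (rmul_samples k d H V))) \<partial>?P)"
    using AE_gs_nondegenerate[OF u \<open>0 < k\<close>]
    by (intro nn_integral_cong_AE) (auto simp: H_def swap_rows_rmul_gs_matrix[OF \<open>0 < k\<close> W ab])
  also have "\<dots> = (\<integral>\<^sup>+V. g (rmul k d W (?R V)) \<partial>distr ?P ?P (rmul_samples k d H))"
    using g_R by (intro nn_integral_distr[symmetric] measurable_rmul_samples[OF u]) simp
  also have "\<dots> = (\<integral>\<^sup>+V. g (rmul k d W (?R V)) \<partial>?P)"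
    unfolding H_def by (simp add: distr_rmul_samples[OF u orthogonal_mat_householder])
  finally show ?thesis .
qed

lemma nn_integral_swap_rows:
  assumes u: "uniform_stiefel k d \<nu>" and ab: "a < k" "b < k" "a \<noteq> b"
    and g: "g \<in> borel_measurable (mat_space k d)"
  shows "(\<integral>\<^sup>+W. g (swap_rows k d a b W) \<partial>\<nu>) = (\<integral>\<^sup>+W. g W \<partial>\<nu>)"
proof -
  let ?P = "PiM {..<d} (\<lambda>_. \<nu>)" and ?R = "\<lambda>V. gs_matrix d (first_rows d V)"
  have "0 < k" using ab by simp
  have g_swap: "(\<lambda>W. g (swap_rows k d a b W)) \<in> borel_measurable (mat_space k d)"
    using measurable_compose[OF measurable_swap_rows[OF ab(1,2)] g] .
  have "(\<integral>\<^sup>+W. g (swap_rows k d a b W) \<partial>\<nu>) =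
      (\<integral>\<^sup>+W. \<integral>\<^sup>+V. g (swap_rows k d a b (rmul k d W (?R V))) \<partial>?P \<partial>\<nu>)"
    by (rule nn_integral_rmul_random_frame[OF u \<open>0 < k\<close> g_swap])
  also have "\<dots> = (\<integral>\<^sup>+W. \<integral>\<^sup>+V. g (rmul k d W (?R V)) \<partial>?P \<partial>\<nu>)"
    using AE_uniform_stiefel[OF u]
    by (rule nn_integral_cong_AE[OF AE_mp[OF _ AE_I2]])
      (simp add: nn_integral_random_frame_swap_rows[OF u \<open>0 < k\<close> _ ab g])
  also have "\<dots> = (\<integral>\<^sup>+W. g W \<partial>\<nu>)"
    by (rule nn_integral_rmul_random_frame[OF u \<open>0 < k\<close> g, symmetric])
  finally show ?thesis .
qed

section \<open>The posterior\<close>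

lemma net_out_swap_rows:
  assumes "a < k" "b < k"
  shows "net_out k d \<sigma> (swap_rows k d a b W) x = net_out k d \<sigma> W x"
proof -
  have "net_out k d \<sigma> (swap_rows k d a b W) x =
      (\<Sum>r<k. 1 / sqrt (real k) * \<sigma> (\<Sum>l<d. W (Transposition.transpose a b r, l) * x l))"
    unfolding net_out_def swap_rows_def
    by (intro sum.cong refl) (auto simp: assms Transposition.transpose_def)
  also have "\<dots> = net_out k d \<sigma> W x"
    unfolding net_out_def using assms
    by (intro sum.reindex_bij_betw[where g="\<lambda>r. 1 / sqrt (real k) * \<sigma> (\<Sum>l<d. W (r,l) * x l)"]
        bij_betw_transpose_iff) auto
  finally show ?thesis .
qed

lemma likelihood_swap_rows:
  "a < k \<Longrightarrow> b < k \<Longrightarrow> likelihood k d n \<Delta> \<sigma> X Y (swap_rows k d a b W) = likelihood k d n \<Delta> \<sigma> X Y W"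
  unfolding likelihood_def by (simp add: net_out_swap_rows)

lemma measurable_likelihood:
  assumes "\<sigma> \<in> borel_measurable borel"
  shows "(\<lambda>W. likelihood k d n \<Delta> \<sigma> X Y W) \<in> borel_measurable (mat_space k d)"
proof -
  have "(\<lambda>W. net_out k d \<sigma> W x) \<in> borel_measurable (mat_space k d)" for x
    unfolding net_out_def using assms by measurable
  then show ?thesis
    unfolding likelihood_def by measurable
qed

lemma likelihood_nonneg: "0 \<le> likelihood k d n \<Delta> \<sigma> X Y W"
  unfolding likelihood_def by (simp add: prod_nonneg)

lemma likelihood_le_1: "0 < \<Delta> \<Longrightarrow> likelihood k d n \<Delta> \<sigma> X Y W \<le> 1"
  unfolding likelihood_def by (intro prod_le_1) (auto simp: divide_nonpos_pos)

lemma measurable_posterior_density: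
  assumes "\<sigma> \<in> borel_measurable borel"
  shows "(\<lambda>W. ennreal (likelihood k d n \<Delta> \<sigma> X Y W / c)) \<in> borel_measurable (mat_space k d)"
  using measurable_likelihood[OF assms] by measurable

lemma AE_posterior:
  assumes u: "uniform_stiefel k d \<nu>" and \<sigma>: "\<sigma> \<in> borel_measurable borel"
    and "AE W in \<nu>. P W"
  shows "AE W in posterior k d n \<Delta> \<sigma> \<nu> X Y. P W"
  unfolding posterior_def using assms(3) measurable_posterior_density[OF \<sigma>]
  by (intro absolutely_continuous_AE[OF _ absolutely_continuousI_density])
    (simp_all add: measurable_uniform_stiefel_iff[OF u])

lemma emeasure_posterior_le_1:
  assumes u: "uniform_stiefel k d \<nu>" and \<sigma>: "\<sigma> \<in> borel_measurable borel" and "0 < \<Delta>"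
  shows "emeasure (posterior k d n \<Delta> \<sigma> \<nu> X Y) (space \<nu>) \<le> 1"
proof -
  interpret prob_space \<nu> by (rule uniform_stiefel_prob_space[OF u])
  let ?L = "\<lambda>W. likelihood k d n \<Delta> \<sigma> X Y W"
  define c where "c = (\<integral>W. ?L W \<partial>\<nu>)"
  have L_bounds: "0 \<le> ?L W" "?L W \<le> 1" for W
    using likelihood_nonneg likelihood_le_1[OF \<open>0 < \<Delta>\<close>] by auto
  have L_meas: "?L \<in> borel_measurable \<nu>"
    unfolding measurable_uniform_stiefel_iff[OF u] by (rule measurable_likelihood[OF \<sigma>])
  then have "integrable \<nu> ?L"
    using L_bounds by (intro integrable_const_bound[where B=1]) auto
  moreover have "0 \<le> c" unfolding c_def using L_bounds by simp
  ultimately have "(\<integral>\<^sup>+W. ennreal (?L W / c) \<partial>\<nu>) = ennreal (\<integral>W. ?L W / c \<partial>\<nu>)"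
    using L_bounds by (intro nn_integral_eq_integral) auto
  also have "\<dots> = ennreal (c / c)" unfolding c_def by simp
  also have "\<dots> \<le> 1" by (cases "c = 0") auto
  finally show ?thesis
    unfolding posterior_def c_def using L_meas
    by (subst emeasure_density) (auto simp: measurable_uniform_stiefel_iff[OF u])
qed

lemma nn_integral_posterior_swap_rows:
  assumes u: "uniform_stiefel k d \<nu>" and \<sigma>: "\<sigma> \<in> borel_measurable borel"
    and ab: "a < k" "b < k" "a \<noteq> b" and g: "g \<in> borel_measurable (mat_space k d)"
  shows "(\<integral>\<^sup>+W. g (swap_rows k d a b W) \<partial>posterior k d n \<Delta> \<sigma> \<nu> X Y) =
    (\<integral>\<^sup>+W. g W \<partial>posterior k d n \<Delta> \<sigma> \<nu> X Y)"
proof -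
  define p where
    "p W = ennreal (likelihood k d n \<Delta> \<sigma> X Y W / (\<integral>W'. likelihood k d n \<Delta> \<sigma> X Y W' \<partial>\<nu>))" for W
  have p: "p \<in> borel_measurable (mat_space k d)"
    unfolding p_def by (rule measurable_posterior_density[OF \<sigma>])
  have p_swap: "p (swap_rows k d a b W) = p W" for W
    unfolding p_def by (simp add: likelihood_swap_rows[OF ab(1,2)])
  have "(\<integral>\<^sup>+W. g (swap_rows k d a b W) \<partial>posterior k d n \<Delta> \<sigma> \<nu> X Y) =
      (\<integral>\<^sup>+W. p (swap_rows k d a b W) * g (swap_rows k d a b W) \<partial>\<nu>)"
    unfolding posterior_def p_def[symmetric] p_swap using p g measurable_swap_rows[OF ab(1,2)]
    by (intro nn_integral_density) (auto simp: measurable_uniform_stiefel_iff[OF u])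
  also have "\<dots> = (\<integral>\<^sup>+W. p W * g W \<partial>\<nu>)"
    using p g by (intro nn_integral_swap_rows[OF u ab]) measurable
  also have "\<dots> = (\<integral>\<^sup>+W. g W \<partial>posterior k d n \<Delta> \<sigma> \<nu> X Y)"
    unfolding posterior_def p_def[symmetric] using p g
    by (intro nn_integral_density[symmetric]) (auto simp: measurable_uniform_stiefel_iff[OF u])
  finally show ?thesis .
qed

lemma posterior_overlap_swap:
  assumes u: "uniform_stiefel k d \<nu>" and \<sigma>: "\<sigma> \<in> borel_measurable borel" and "j < k" "j' < k"
  shows "(\<integral>\<^sup>+W. ennreal ((dot d x (mrow W j'))\<^sup>2) \<partial>posterior k d n \<Delta> \<sigma> \<nu> X Y) =
    (\<integral>\<^sup>+W. ennreal ((dot d x (mrow W j))\<^sup>2) \<partial>posterior k d n \<Delta> \<sigma> \<nu> X Y)"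
proof (cases "j' = j")
  case False
  have "(\<lambda>W. ennreal ((dot d x (mrow W j'))\<^sup>2)) \<in> borel_measurable (mat_space k d)"
    using \<open>j' < k\<close> by measurable
  moreover have "dot d x (mrow (swap_rows k d j j' W) j') = dot d x (mrow W j)" for W
    using \<open>j < k\<close> \<open>j' < k\<close> unfolding swap_rows_def by (intro dot_cong) auto
  ultimately show ?thesis
    using False nn_integral_posterior_swap_rows[OF u \<sigma> \<open>j < k\<close> \<open>j' < k\<close>,
        of "\<lambda>W. ennreal ((dot d x (mrow W j'))\<^sup>2)"]
    by simp
qed simp

lemma posterior_overlap_sum_le:
  assumes u: "uniform_stiefel k d \<nu>" and \<sigma>: "\<sigma> \<in> borel_measurable borel" and "0 < \<Delta>"
    and x: "sqnorm d x \<le> 1"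
  shows "(\<Sum>j<k. \<integral>\<^sup>+W. ennreal ((dot d x (mrow W j))\<^sup>2) \<partial>posterior k d n \<Delta> \<sigma> \<nu> X Y) \<le> 1"
proof -
  let ?post = "posterior k d n \<Delta> \<sigma> \<nu> X Y"
  have sets_post: "sets ?post = sets (mat_space k d)"
    unfolding posterior_def by (simp add: sets_uniform_stiefel[OF u])
  have "(\<Sum>j<k. \<integral>\<^sup>+W. ennreal ((dot d x (mrow W j))\<^sup>2) \<partial>?post) =
      (\<integral>\<^sup>+W. (\<Sum>j<k. ennreal ((dot d x (mrow W j))\<^sup>2)) \<partial>?post)"
    using sets_post[measurable_cong] by (intro nn_integral_sum[symmetric]) measurable
  also have "\<dots> \<le> (\<integral>\<^sup>+W. 1 \<partial>?post)"
  proof (rule nn_integral_mono_AE)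
    have "(\<Sum>j<k. ennreal ((dot d x (mrow W j))\<^sup>2)) \<le> 1" if "W \<in> stiefel k d" for W
      using bessel_inequality[OF orthonormal_seq_stiefel[OF that], of x] x by simp
    moreover have "AE W in ?post. W \<in> stiefel k d"
      by (rule AE_posterior[OF u \<sigma> AE_uniform_stiefel[OF u]])
    ultimately show "AE W in ?post. (\<Sum>j<k. ennreal ((dot d x (mrow W j))\<^sup>2)) \<le> 1"
      by (auto elim: AE_mp)
  qed
  also have "\<dots> \<le> 1"
    using emeasure_posterior_le_1[OF u \<sigma> \<open>0 < \<Delta>\<close>] by (simp add: posterior_def)
  finally show ?thesis .
qed

lemma posterior_overlap_le:
  assumes u: "uniform_stiefel k d \<nu>" and \<sigma>: "\<sigma> \<in> borel_measurable borel" and "0 < \<Delta>"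
    and x: "sqnorm d x \<le> 1" and "j < k"
  shows "(\<integral>\<^sup>+W. ennreal ((dot d x (mrow W j))\<^sup>2) \<partial>posterior k d n \<Delta> \<sigma> \<nu> X Y) \<le> ennreal (1 / real k)"
proof -
  define I where "I = (\<integral>\<^sup>+W. ennreal ((dot d x (mrow W j))\<^sup>2) \<partial>posterior k d n \<Delta> \<sigma> \<nu> X Y)"
  have "of_nat k * I = (\<Sum>j'<k. \<integral>\<^sup>+W. ennreal ((dot d x (mrow W j'))\<^sup>2) \<partial>posterior k d n \<Delta> \<sigma> \<nu> X Y)"
    unfolding I_def by (simp add: posterior_overlap_swap[OF u \<sigma> \<open>j < k\<close>])
  also have "\<dots> \<le> 1" by (rule posterior_overlap_sum_le[OF u \<sigma> \<open>0 < \<Delta>\<close> x])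
  finally have "of_nat k * I \<le> 1" .
  then have "ennreal (1 / real k) * (of_nat k * I) \<le> ennreal (1 / real k)"
    using mult_left_mono[of _ 1 "ennreal (1 / real k)"] by simp
  moreover have "ennreal (1 / real k) * of_nat k = 1"
    using \<open>j < k\<close> by (simp add: ennreal_of_nat_eq_real_of_nat ennreal_mult[symmetric])
  ultimately show ?thesis unfolding I_def by (simp add: mult.assoc[symmetric])
qed

lemma (in prob_space) nn_integral_le_const_AE:
  assumes "AE x in M. f x \<le> c"
  shows "(\<integral>\<^sup>+x. f x \<partial>M) \<le> c"
proof -
  have "(\<integral>\<^sup>+x. f x \<partial>M) \<le> (\<integral>\<^sup>+x. c \<partial>M)" using assms by (rule nn_integral_mono_AE)
  then show ?thesis by (simp add: emeasure_space_1)
qed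

lemma expected_posterior_overlap_le:
  assumes u: "uniform_stiefel k d \<nu>" and \<sigma>: "\<sigma> \<in> borel_measurable borel" and "0 < \<Delta>"
    and "i < k" "j < k" and "prob_space MX" "prob_space MZ"
  shows "(\<integral>\<^sup>+ W0. \<integral>\<^sup>+ X. \<integral>\<^sup>+ Z.
      (\<integral>\<^sup>+ W1. ennreal ((\<Sum>l<d. W0 (i,l) * W1 (j,l))\<^sup>2) \<partial>posterior k d n \<Delta> \<sigma> \<nu> X (Y W0 X Z))
      \<partial>MZ \<partial>MX \<partial>\<nu>) \<le> ennreal (1 / real k)"
proof -
  interpret \<nu>: prob_space \<nu> by (rule uniform_stiefel_prob_space[OF u])
  interpret X: prob_space MX by fact
  interpret Z: prob_space MZ by fact
  have "(\<integral>\<^sup>+ W1. ennreal ((\<Sum>l<d. W0 (i,l) * W1 (j,l))\<^sup>2) \<partial>posterior k d n \<Delta> \<sigma> \<nu> X Y')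
      \<le> ennreal (1 / real k)" if "W0 \<in> stiefel k d" for W0 X Y'
    using posterior_overlap_le[OF u \<sigma> \<open>0 < \<Delta>\<close> _ \<open>j < k\<close>, of "mrow W0 i"]
      orthonormal_seq_stiefel[OF that] \<open>i < k\<close>
    unfolding orthonormal_seq_def dot_def by simp
  then have "(\<integral>\<^sup>+ X. \<integral>\<^sup>+ Z.
      (\<integral>\<^sup>+ W1. ennreal ((\<Sum>l<d. W0 (i,l) * W1 (j,l))\<^sup>2) \<partial>posterior k d n \<Delta> \<sigma> \<nu> X (Y W0 X Z))
      \<partial>MZ \<partial>MX) \<le> ennreal (1 / real k)" if "W0 \<in> stiefel k d" for W0
    using that by (intro X.nn_integral_le_const_AE Z.nn_integral_le_const_AE AE_I2)
  with AE_uniform_stiefel[OF u] show ?thesis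
    by (intro \<nu>.nn_integral_le_const_AE) (auto elim: AE_mp)
qed

lemma prob_space_gauss_iid: "finite I \<Longrightarrow> prob_space (gauss_iid I)"
  unfolding gauss_iid_def N01_def by (auto intro!: prob_space_PiM prob_space_normal_density)

theorem mainTheorem2:
  shows "\<exists>C>0. \<forall>(d::nat) (k::nat) (n::nat) (\<Delta>::real) (\<sigma>::real \<Rightarrow> real) \<nu> (i::nat) (j::nat).
     2 \<le> k \<longrightarrow> k \<le> d \<longrightarrow> 1 \<le> n \<longrightarrow> 0 < \<Delta> \<longrightarrow>
     \<sigma> \<in> borel_measurable borel \<longrightarrow> uniform_stiefel k d \<nu> \<longrightarrow>
     i < k \<longrightarrow> j < k \<longrightarrow> i \<noteq> j \<longrightarrow>
     (\<integral>\<^sup>+ W0. \<integral>\<^sup>+ X. \<integral>\<^sup>+ Z.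
        (\<integral>\<^sup>+ W1. ennreal ((\<Sum>l<d. W0 (i,l) * W1 (j,l))\<^sup>2)
            \<partial>posterior k d n \<Delta> \<sigma> \<nu> X (labels k d \<Delta> \<sigma> W0 X Z))
        \<partial>gauss_iid {..<n} \<partial>gauss_iid ({..<n} \<times> {..<d}) \<partial>\<nu>)
     \<le> ennreal (C / real k)"
  \<comment> \<open>Bessel's inequality bounds the sum over all \<open>k\<close> rows of \<open>W1\<close>.\<close>
  by (intro exI[of _ 1] conjI allI impI expected_posterior_overlap_le prob_space_gauss_iid) simp_all

end
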